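(* Consider a sovereign ZK rollup and suppose the recursive proof system used by the rollup is complete and sound. Then, if a claimed state root for a new rollup block is accepted by a light client, it is the valid state root corresponding to the sequence of transactions within the latest rollup block and its prefix with overwhelming probability.
   Context: A rollup's parent chain is a blockchain that orders rollup transactions (without executing them); full nodes group the rollup transactions into a chain of rollup blocks, each with a transaction root and a state root, where the state root of a block is the binding commitment $\langle\delta^*(\mathsf{st}_0,\overline{\mathrm{tx}})\rangle$ to the state obtained by applying, via the transition function $\delta$ starting from the genesis state $\mathsf{st}_0$, all transactions $\overline{\mathrm{tx}}$ in the block and its prefix. In a sovereign ZK rollup there is no contract on the parent chain checking the state; full nodes maintain a root (commitment) of the whole rollup transaction history and a recursive validity proof, and a light client queried for the latest state root receives from a full node the claimed state root, the claimed root of the transaction history and a proof, which it verifies using as public inputs these two roots and selected rollup data on the parent chain; it accepts the state root iff the proof verifies. The recursive proof system is complete if the verifier always accepts proofs for valid roots, and sound if no PPT adversary can produce an accepted proof for an invalid root except with probability negligible in the security parameter $\lambda$. "Overwhelming probability" means except with probability negligible in $\lambda$. *)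

theory Defs
  imports "HOL-Probability.Probability_Mass_Function"
begin

definition negligible :: "(nat \<Rightarrow> real) \<Rightarrow> bool" where
  "negligible f \<longleftrightarrow> (\<forall>c::nat. \<exists>N. \<forall>n\<ge>N. \<bar>f n\<bar> \<le> 1 / real n ^ c)"

definition delta_star :: "('st \<Rightarrow> 'tx \<Rightarrow> 'st) \<Rightarrow> 'st \<Rightarrow> 'tx list \<Rightarrow> 'st" where
  "delta_star \<delta> st0 txs = foldl \<delta> st0 txs"

(* The valid state root of the latest rollup block determined by the parent-chain
   data d: commitment (at security parameter n) to delta^*(st0, txs_of d), where
   txs_of d is the sequence of rollup transactions in the latest rollup block
   and its prefix. *)
definition valid_state_root ::
  "(nat \<Rightarrow> 'st \<Rightarrow> 'c) \<Rightarrow> ('st \<Rightarrow> 'tx \<Rightarrow> 'st) \<Rightarrow> 'st \<Rightarrow> ('d \<Rightarrow> 'tx list)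
   \<Rightarrow> nat \<Rightarrow> 'd \<Rightarrow> 'c" where
  "valid_state_root commit \<delta> st0 txs_of n d = commit n (delta_star \<delta> st0 (txs_of d))"

definition valid_hist_root ::
  "(nat \<Rightarrow> 'tx list \<Rightarrow> 'h) \<Rightarrow> ('d \<Rightarrow> 'tx list) \<Rightarrow> nat \<Rightarrow> 'd \<Rightarrow> 'h" where
  "valid_hist_root hcommit txs_of n d = hcommit n (txs_of d)"

definition valid_roots ::
  "(nat \<Rightarrow> 'st \<Rightarrow> 'c) \<Rightarrow> (nat \<Rightarrow> 'tx list \<Rightarrow> 'h) \<Rightarrow> ('st \<Rightarrow> 'tx \<Rightarrow> 'st) \<Rightarrow> 'st
   \<Rightarrow> ('d \<Rightarrow> 'tx list) \<Rightarrow> nat \<Rightarrow> 'd \<Rightarrow> 'c \<Rightarrow> 'h \<Rightarrow> bool" where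
  "valid_roots commit hcommit \<delta> st0 txs_of n d sr hr \<longleftrightarrow>
     sr = valid_state_root commit \<delta> st0 txs_of n d \<and> hr = valid_hist_root hcommit txs_of n d"

definition light_client_accepts ::
  "(nat \<Rightarrow> 'c \<Rightarrow> 'h \<Rightarrow> 'd \<Rightarrow> 'p \<Rightarrow> bool) \<Rightarrow> nat \<Rightarrow> 'd \<Rightarrow> 'c \<Rightarrow> 'h \<Rightarrow> 'p \<Rightarrow> bool" where
  "light_client_accepts Verify n d sr hr p \<longleftrightarrow> Verify n sr hr d p"

definition rps_complete ::
  "(nat \<Rightarrow> 'c \<Rightarrow> 'h \<Rightarrow> 'd \<Rightarrow> 'p \<Rightarrow> bool) \<Rightarrow> (nat \<Rightarrow> 'd \<Rightarrow> 'p)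
   \<Rightarrow> (nat \<Rightarrow> 'st \<Rightarrow> 'c) \<Rightarrow> (nat \<Rightarrow> 'tx list \<Rightarrow> 'h) \<Rightarrow> ('st \<Rightarrow> 'tx \<Rightarrow> 'st) \<Rightarrow> 'st
   \<Rightarrow> ('d \<Rightarrow> 'tx list) \<Rightarrow> bool" where
  "rps_complete Verify Prove commit hcommit \<delta> st0 txs_of \<longleftrightarrow>
     (\<forall>n d. Verify n (valid_state_root commit \<delta> st0 txs_of n d)
                      (valid_hist_root hcommit txs_of n d) d (Prove n d))"

(* Soundness: for every PPT adversary (the abstract class PPT), which on security
   parameter n outputs a distribution over (parent-chain data, claimed state root,
   claimed history root, proof), the probability of an accepted proof for invalid
   roots is negligible. *)
definition rps_sound ::
  "(nat \<Rightarrow> ('d \<times> 'c \<times> 'h \<times> 'p) pmf) set \<Rightarrow> (nat \<Rightarrow> 'c \<Rightarrow> 'h \<Rightarrow> 'd \<Rightarrow> 'p \<Rightarrow> bool)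
   \<Rightarrow> (nat \<Rightarrow> 'st \<Rightarrow> 'c) \<Rightarrow> (nat \<Rightarrow> 'tx list \<Rightarrow> 'h) \<Rightarrow> ('st \<Rightarrow> 'tx \<Rightarrow> 'st) \<Rightarrow> 'st
   \<Rightarrow> ('d \<Rightarrow> 'tx list) \<Rightarrow> bool" where
  "rps_sound PPT Verify commit hcommit \<delta> st0 txs_of \<longleftrightarrow>
     (\<forall>A\<in>PPT. negligible (\<lambda>n. measure_pmf.prob (A n)
        {(d, sr, hr, p). Verify n sr hr d p \<and>
                         \<not> valid_roots commit hcommit \<delta> st0 txs_of n d sr hr}))"

end

theory Submission
  imports Defs
begin

(* An accepted proof for a wrong state root is in particular an accepted proof for
   an invalid pair of roots, so the light client's failure probability is bounded by
   the soundness error of the proof system, which is negligible. *)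

lemma negligible_mono:
  assumes "negligible g" and "\<And>n. \<bar>f n\<bar> \<le> \<bar>g n\<bar>"
  shows "negligible f"
  unfolding negligible_def
proof
  fix c :: nat
  obtain N where "\<forall>n\<ge>N. \<bar>g n\<bar> \<le> 1 / real n ^ c"
    using assms(1) unfolding negligible_def by blast
  then have "\<forall>n\<ge>N. \<bar>f n\<bar> \<le> 1 / real n ^ c"
    using assms(2) order_trans by blast
  then show "\<exists>N. \<forall>n\<ge>N. \<bar>f n\<bar> \<le> 1 / real n ^ c" ..
qed

lemma accepted_invalid_state_root_subset_accepted_invalid_roots:
  "{(d, sr, hr, p). light_client_accepts Verify n d sr hr p \<and>
                    sr \<noteq> valid_state_root commit \<delta> st0 txs_of n d}
   \<subseteq> {(d, sr, hr, p). Verify n sr hr d p \<and>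
                    \<not> valid_roots commit hcommit \<delta> st0 txs_of n d sr hr}"
  by (auto simp: light_client_accepts_def valid_roots_def)

theorem lemma4:
  fixes PPT :: "(nat \<Rightarrow> ('d \<times> 'c \<times> 'h \<times> 'p) pmf) set"
    and Verify :: "nat \<Rightarrow> 'c \<Rightarrow> 'h \<Rightarrow> 'd \<Rightarrow> 'p \<Rightarrow> bool"
    and Prove :: "nat \<Rightarrow> 'd \<Rightarrow> 'p"
    and commit :: "nat \<Rightarrow> 'st \<Rightarrow> 'c"
    and hcommit :: "nat \<Rightarrow> 'tx list \<Rightarrow> 'h"
    and \<delta> :: "'st \<Rightarrow> 'tx \<Rightarrow> 'st"
    and st0 :: 'st
    and txs_of :: "'d \<Rightarrow> 'tx list"
  assumes "rps_complete Verify Prove commit hcommit \<delta> st0 txs_of"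
    and "rps_sound PPT Verify commit hcommit \<delta> st0 txs_of"
  shows "\<forall>A\<in>PPT. negligible (\<lambda>n. measure_pmf.prob (A n)
           {(d, sr, hr, p). light_client_accepts Verify n d sr hr p \<and>
                            sr \<noteq> valid_state_root commit \<delta> st0 txs_of n d})"
proof
  fix A assume "A \<in> PPT"
  let ?accepted_wrong_state_root = "\<lambda>n. {(d, sr, hr, p). light_client_accepts Verify n d sr hr p \<and>
                            sr \<noteq> valid_state_root commit \<delta> st0 txs_of n d}"
  let ?accepted_invalid_roots = "\<lambda>n. {(d, sr, hr, p). Verify n sr hr d p \<and>
                            \<not> valid_roots commit hcommit \<delta> st0 txs_of n d sr hr}"
  have "negligible (\<lambda>n. measure_pmf.prob (A n) (?accepted_invalid_roots n))"
    using \<open>A \<in> PPT\<close> assms(2) unfolding rps_sound_def by blast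
  moreover have "\<bar>measure_pmf.prob (A n) (?accepted_wrong_state_root n)\<bar>
      \<le> \<bar>measure_pmf.prob (A n) (?accepted_invalid_roots n)\<bar>" for n
    using measure_pmf.finite_measure_mono[OF
        accepted_invalid_state_root_subset_accepted_invalid_roots]
    by simp
  ultimately show "negligible (\<lambda>n. measure_pmf.prob (A n) (?accepted_wrong_state_root n))"
    by (rule negligible_mono)
qed

end
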